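(* Let $(G,\cdot)$ be a group and $\psi\in\operatorname{End}(G,\cdot)$. (1) If $\psi([\psi(G),G])\le Z(G,\cdot)$, then each of the following maps $G\times G\to G\times G$ defines a set-theoretic non-degenerate solution of the Yang--Baxter equation on $G$: $$r_1(g,h)=\big(\psi(g)\,h\,\psi(g)^{-1},\ \psi(h^{-1}g)\,h^{-1}\psi(g)^{-1}g\,\psi(g)\,h\,\psi(g^{-1}h)\big);$$ $$r_2(g,h)=\big(g\,\psi(g)\,h\,\psi(g)^{-1}g^{-1},\ \psi(g h^{-1}g^{-1})\,g\,\psi(g h g^{-1})\big).$$ These two are mutually inverse and coincide if and only if $(G,\cdot)$ is abelian. (2) If moreover $\psi([G,G])\le Z(G,\cdot)$, then also $$r_3(g,h)=\big(\psi(g)^{-1}h\,\psi(g),\ \psi(g)^{-1}h^{-1}\psi(g)\,g\,h\big);$$ $$r_4(g,h)=\big(g\,h\,\psi(h)\,g^{-1}\psi(h)^{-1},\ \psi(h)\,g\,\psi(h)^{-1}\big)$$ define set-theoretic non-degenerate solutions of the Yang--Baxter equation; they are mutually inverse and coincide if and only if $g\,\psi(g)\,h\,\psi(g)^{-1}=h\,\psi(h)\,g\,\psi(h)^{-1}$ for all $g,h\in G$.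
   Context: All products are in $(G,\cdot)$; $\psi(G)$ is the image of $\psi$; $[x,y]=xyx^{-1}y^{-1}$ and $[A,B]$ is the subgroup generated by $[a,b]$, $a\in A,b\in B$; $Z(G,\cdot)$ is the centre. A set-theoretic solution of the Yang--Baxter equation is a pair $(X,r)$ with $X\neq\emptyset$ and $r\colon X\times X\to X\times X$, $r(x,y)=(\sigma_x(y),\tau_y(x))$, a bijection satisfying $(r\times\mathrm{id}_X)(\mathrm{id}_X\times r)(r\times\mathrm{id}_X)=(\mathrm{id}_X\times r)(r\times\mathrm{id}_X)(\mathrm{id}_X\times r)$; it is non-degenerate if all $\sigma_x$ and $\tau_x$ are bijective. *)

theory Defs
  imports "HOL-Algebra.Algebra"
begin

definition r12 :: "('a \<times> 'a \<Rightarrow> 'a \<times> 'a) \<Rightarrow> 'a \<times> 'a \<times> 'a \<Rightarrow> 'a \<times> 'a \<times> 'a" where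
  "r12 r t = (case t of (x, y, z) \<Rightarrow> (fst (r (x, y)), snd (r (x, y)), z))"

definition r23 :: "('a \<times> 'a \<Rightarrow> 'a \<times> 'a) \<Rightarrow> 'a \<times> 'a \<times> 'a \<Rightarrow> 'a \<times> 'a \<times> 'a" where
  "r23 r t = (case t of (x, y, z) \<Rightarrow> (x, fst (r (y, z)), snd (r (y, z))))"

definition ybe_solution :: "'a set \<Rightarrow> ('a \<times> 'a \<Rightarrow> 'a \<times> 'a) \<Rightarrow> bool" where
  "ybe_solution S r \<longleftrightarrow> S \<noteq> {} \<and> bij_betw r (S \<times> S) (S \<times> S) \<and>
     (\<forall>x\<in>S. \<forall>y\<in>S. \<forall>z\<in>S.
        r12 r (r23 r (r12 r (x, y, z))) = r23 r (r12 r (r23 r (x, y, z))))"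

text \<open>r(x,y) = (sigma_x(y), tau_y(x)); non-degenerate: all sigma_x, tau_x bijective on S.\<close>
definition ybe_nondegenerate :: "'a set \<Rightarrow> ('a \<times> 'a \<Rightarrow> 'a \<times> 'a) \<Rightarrow> bool" where
  "ybe_nondegenerate S r \<longleftrightarrow>
     (\<forall>x\<in>S. bij_betw (\<lambda>y. fst (r (x, y))) S S) \<and>
     (\<forall>x\<in>S. bij_betw (\<lambda>y. snd (r (y, x))) S S)"

definition nd_ybe_solution :: "'a set \<Rightarrow> ('a \<times> 'a \<Rightarrow> 'a \<times> 'a) \<Rightarrow> bool" where
  "nd_ybe_solution S r \<longleftrightarrow> ybe_solution S r \<and> ybe_nondegenerate S r"

definition grp_center :: "('a, 'b) monoid_scheme \<Rightarrow> 'a set" where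
  "grp_center G = {z \<in> carrier G. \<forall>x\<in>carrier G. z \<otimes>\<^bsub>G\<^esub> x = x \<otimes>\<^bsub>G\<^esub> z}"

definition comm_subgroup :: "('a, 'b) monoid_scheme \<Rightarrow> 'a set \<Rightarrow> 'a set \<Rightarrow> 'a set" where
  "comm_subgroup G A B = generate G
     {a \<otimes>\<^bsub>G\<^esub> b \<otimes>\<^bsub>G\<^esub> inv\<^bsub>G\<^esub> a \<otimes>\<^bsub>G\<^esub> inv\<^bsub>G\<^esub> b | a b. a \<in> A \<and> b \<in> B}"

definition yb_r1 :: "('a, 'b) monoid_scheme \<Rightarrow> ('a \<Rightarrow> 'a) \<Rightarrow> 'a \<times> 'a \<Rightarrow> 'a \<times> 'a" where
  "yb_r1 G \<psi> p = (case p of (g, h) \<Rightarrow>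
     (\<psi> g \<otimes>\<^bsub>G\<^esub> h \<otimes>\<^bsub>G\<^esub> inv\<^bsub>G\<^esub> (\<psi> g),
      \<psi> (inv\<^bsub>G\<^esub> h \<otimes>\<^bsub>G\<^esub> g) \<otimes>\<^bsub>G\<^esub> inv\<^bsub>G\<^esub> h \<otimes>\<^bsub>G\<^esub> inv\<^bsub>G\<^esub> (\<psi> g) \<otimes>\<^bsub>G\<^esub> g
        \<otimes>\<^bsub>G\<^esub> \<psi> g \<otimes>\<^bsub>G\<^esub> h \<otimes>\<^bsub>G\<^esub> \<psi> (inv\<^bsub>G\<^esub> g \<otimes>\<^bsub>G\<^esub> h)))"

definition yb_r2 :: "('a, 'b) monoid_scheme \<Rightarrow> ('a \<Rightarrow> 'a) \<Rightarrow> 'a \<times> 'a \<Rightarrow> 'a \<times> 'a" where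
  "yb_r2 G \<psi> p = (case p of (g, h) \<Rightarrow>
     (g \<otimes>\<^bsub>G\<^esub> \<psi> g \<otimes>\<^bsub>G\<^esub> h \<otimes>\<^bsub>G\<^esub> inv\<^bsub>G\<^esub> (\<psi> g) \<otimes>\<^bsub>G\<^esub> inv\<^bsub>G\<^esub> g,
      \<psi> (g \<otimes>\<^bsub>G\<^esub> inv\<^bsub>G\<^esub> h \<otimes>\<^bsub>G\<^esub> inv\<^bsub>G\<^esub> g) \<otimes>\<^bsub>G\<^esub> g
        \<otimes>\<^bsub>G\<^esub> \<psi> (g \<otimes>\<^bsub>G\<^esub> h \<otimes>\<^bsub>G\<^esub> inv\<^bsub>G\<^esub> g)))"

definition yb_r3 :: "('a, 'b) monoid_scheme \<Rightarrow> ('a \<Rightarrow> 'a) \<Rightarrow> 'a \<times> 'a \<Rightarrow> 'a \<times> 'a" where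
  "yb_r3 G \<psi> p = (case p of (g, h) \<Rightarrow>
     (inv\<^bsub>G\<^esub> (\<psi> g) \<otimes>\<^bsub>G\<^esub> h \<otimes>\<^bsub>G\<^esub> \<psi> g,
      inv\<^bsub>G\<^esub> (\<psi> g) \<otimes>\<^bsub>G\<^esub> inv\<^bsub>G\<^esub> h \<otimes>\<^bsub>G\<^esub> \<psi> g \<otimes>\<^bsub>G\<^esub> g \<otimes>\<^bsub>G\<^esub> h))"

definition yb_r4 :: "('a, 'b) monoid_scheme \<Rightarrow> ('a \<Rightarrow> 'a) \<Rightarrow> 'a \<times> 'a \<Rightarrow> 'a \<times> 'a" where
  "yb_r4 G \<psi> p = (case p of (g, h) \<Rightarrow>
     (g \<otimes>\<^bsub>G\<^esub> h \<otimes>\<^bsub>G\<^esub> \<psi> h \<otimes>\<^bsub>G\<^esub> inv\<^bsub>G\<^esub> g \<otimes>\<^bsub>G\<^esub> inv\<^bsub>G\<^esub> (\<psi> h),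
      \<psi> h \<otimes>\<^bsub>G\<^esub> g \<otimes>\<^bsub>G\<^esub> inv\<^bsub>G\<^esub> (\<psi> h)))"

end

theory Submission
  imports Defs
begin

(*
  Both pairs of maps are instances of one construction. Let (H, o) be a group and
  r(x, y) = (sigma_x(y), tau_y(x)) a map on H x H such that sigma is a left action of H on
  itself, sigma_x(y) o tau_y(x) = x o y, and sigma_x(y o z) = sigma_x(y) o sigma_(tau_y(x))(z).
  Then tau is a right action, and r satisfies the braid relation (the first and third
  coordinates are governed by the two actions, the middle one is forced by the product)
  and is non-degenerate.

  For r1 take x o y = x psi(x) y psi(x)^-1 and sigma_x(y) = psi(x) y psi(x)^-1. Since
  psi([psi(G), G]) is central, psi(x o y) and psi(x) psi(y) differ by a central factor and
  hence induce the same inner automorphism; this makes o associative and sigma an action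
  of (G, o). For r3 take the product of G itself and sigma_x(y) = psi(x)^-1 y psi(x), now
  using that psi([G, G]) is central. In both cases r2, resp. r4, is an explicit two-sided
  inverse, and the inverse of a non-degenerate solution is again one.
*)

section \<open>Inverses of non-degenerate solutions\<close>

lemma r12_inverse:
  assumes closed: "\<And>x y. x \<in> S \<Longrightarrow> y \<in> S \<Longrightarrow> r (x, y) \<in> S \<times> S"
    and inv: "\<And>x y. x \<in> S \<Longrightarrow> y \<in> S \<Longrightarrow> r' (r (x, y)) = (x, y)"
    and t: "t \<in> S \<times> S \<times> S"
  shows "r12 r t \<in> S \<times> S \<times> S" and "r12 r' (r12 r t) = t"
proof -
  obtain x y z where "t = (x, y, z)" "x \<in> S" "y \<in> S" "z \<in> S" using t by auto
  with closed[of x y] inv[of x y]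
  show "r12 r t \<in> S \<times> S \<times> S" "r12 r' (r12 r t) = t" by (auto simp: r12_def)
qed

lemma r23_inverse:
  assumes closed: "\<And>x y. x \<in> S \<Longrightarrow> y \<in> S \<Longrightarrow> r (x, y) \<in> S \<times> S"
    and inv: "\<And>x y. x \<in> S \<Longrightarrow> y \<in> S \<Longrightarrow> r' (r (x, y)) = (x, y)"
    and t: "t \<in> S \<times> S \<times> S"
  shows "r23 r t \<in> S \<times> S \<times> S" and "r23 r' (r23 r t) = t"
proof -
  obtain x y z where "t = (x, y, z)" "x \<in> S" "y \<in> S" "z \<in> S" using t by auto
  with closed[of y z] inv[of y z]
  show "r23 r t \<in> S \<times> S \<times> S" "r23 r' (r23 r t) = t" by (auto simp: r23_def)
qed

lemma braid_relation_inverse: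
  assumes braid: "\<And>x y z. x \<in> S \<Longrightarrow> y \<in> S \<Longrightarrow> z \<in> S \<Longrightarrow>
      r12 r (r23 r (r12 r (x, y, z))) = r23 r (r12 r (r23 r (x, y, z)))"
    and closed: "\<And>x y. x \<in> S \<Longrightarrow> y \<in> S \<Longrightarrow> r (x, y) \<in> S \<times> S"
      "\<And>x y. x \<in> S \<Longrightarrow> y \<in> S \<Longrightarrow> r' (x, y) \<in> S \<times> S"
    and inv: "\<And>x y. x \<in> S \<Longrightarrow> y \<in> S \<Longrightarrow> r (r' (x, y)) = (x, y)"
      "\<And>x y. x \<in> S \<Longrightarrow> y \<in> S \<Longrightarrow> r' (r (x, y)) = (x, y)"
    and s: "s \<in> S \<times> S \<times> S"
  shows "r12 r' (r23 r' (r12 r' s)) = r23 r' (r12 r' (r23 r' s))"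
proof -
  note r'_then_r = r12_inverse[OF closed(2) inv(1)] r23_inverse[OF closed(2) inv(1)]
  note r_then_r' = r12_inverse[OF closed(1) inv(2)] r23_inverse[OF closed(1) inv(2)]
  define t where "t = r23 r' (r12 r' (r23 r' s))"
  have t: "t \<in> S \<times> S \<times> S" using s by (simp add: t_def r'_then_r)
  then obtain x y z where xyz: "t = (x, y, z)" "x \<in> S" "y \<in> S" "z \<in> S" by auto
  have "r12 r (r23 r (r12 r t)) = s"
    using braid[OF xyz(2-4)] s by (simp add: xyz(1)[symmetric] t_def r'_then_r)
  then have "r12 r' (r23 r' (r12 r' s)) = t"
    using t by (auto simp: r_then_r')
  then show ?thesis by (simp add: t_def)
qed

lemma bij_betw_fst_inverse:
  assumes nd: "\<And>x. x \<in> S \<Longrightarrow> bij_betw (\<lambda>y. fst (r (x, y))) S S"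
    and closed: "\<And>x y. x \<in> S \<Longrightarrow> y \<in> S \<Longrightarrow> r (x, y) \<in> S \<times> S"
      "\<And>x y. x \<in> S \<Longrightarrow> y \<in> S \<Longrightarrow> r' (x, y) \<in> S \<times> S"
    and inv: "\<And>x y. x \<in> S \<Longrightarrow> y \<in> S \<Longrightarrow> r (r' (x, y)) = (x, y)"
      "\<And>x y. x \<in> S \<Longrightarrow> y \<in> S \<Longrightarrow> r' (r (x, y)) = (x, y)"
    and u: "u \<in> S"
  shows "bij_betw (\<lambda>v. fst (r' (u, v))) S S"
  \<comment> \<open>inverse: \<open>x\<close> goes to the second coordinate of \<open>r (x, y)\<close> for the unique \<open>y\<close> with first coordinate \<open>u\<close>\<close>
proof (rule bij_betw_byWitness[where f' = "\<lambda>x. snd (r (x, inv_into S (\<lambda>y. fst (r (x, y))) u))"])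
  show "\<forall>v\<in>S. snd (r (fst (r' (u, v)), inv_into S (\<lambda>y. fst (r (fst (r' (u, v)), y))) u)) = v"
  proof
    fix v assume v: "v \<in> S"
    obtain x y where xy: "r' (u, v) = (x, y)" by fastforce
    have S: "x \<in> S" "y \<in> S" using closed(2)[OF u v] xy by auto
    have r: "r (x, y) = (u, v)" using inv(1)[OF u v] xy by simp
    have "inv_into S (\<lambda>y. fst (r (x, y))) u = y"
      using bij_betw_inv_into_left[OF nd[OF S(1)] S(2)] r by simp
    then show "snd (r (fst (r' (u, v)), inv_into S (\<lambda>y. fst (r (fst (r' (u, v)), y))) u)) = v"
      using xy r by simp
  qed
  show "\<forall>x\<in>S. fst (r' (u, snd (r (x, inv_into S (\<lambda>y. fst (r (x, y))) u)))) = x"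
  proof
    fix x assume x: "x \<in> S"
    define y where "y = inv_into S (\<lambda>y. fst (r (x, y))) u"
    have y: "y \<in> S" "fst (r (x, y)) = u"
      using bij_betw_inv_into[OF nd[OF x]] bij_betw_inv_into_right[OF nd[OF x] u] u
      unfolding y_def by (auto simp: bij_betw_def)
    have "r (x, y) = (u, snd (r (x, y)))" using y(2) by (metis prod.collapse)
    then have "r' (u, snd (r (x, y))) = (x, y)" using inv(2)[OF x y(1)] by metis
    then show "fst (r' (u, snd (r (x, inv_into S (\<lambda>y. fst (r (x, y))) u)))) = x"
      by (simp add: y_def)
  qed
  show "(\<lambda>v. fst (r' (u, v))) ` S \<subseteq> S" using closed(2)[OF u] by (auto simp: mem_Times_iff)
  show "(\<lambda>x. snd (r (x, inv_into S (\<lambda>y. fst (r (x, y))) u))) ` S \<subseteq> S"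
  proof (rule image_subsetI)
    fix x assume x: "x \<in> S"
    then have "inv_into S (\<lambda>y. fst (r (x, y))) u \<in> S"
      using bij_betw_apply[OF bij_betw_inv_into[OF nd] u] by blast
    then show "snd (r (x, inv_into S (\<lambda>y. fst (r (x, y))) u)) \<in> S"
      using closed(1)[OF x] by (auto simp: mem_Times_iff)
  qed
qed

lemma nd_ybe_solution_inverse:
  assumes sol: "nd_ybe_solution S r"
    and closed': "\<And>x y. x \<in> S \<Longrightarrow> y \<in> S \<Longrightarrow> r' (x, y) \<in> S \<times> S"
    and inv: "\<And>x y. x \<in> S \<Longrightarrow> y \<in> S \<Longrightarrow> r (r' (x, y)) = (x, y)"
      "\<And>x y. x \<in> S \<Longrightarrow> y \<in> S \<Longrightarrow> r' (r (x, y)) = (x, y)"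
  shows "nd_ybe_solution S r'"
proof -
  have nonempty: "S \<noteq> {}" and bij: "bij_betw r (S \<times> S) (S \<times> S)"
    and braid: "\<And>x y z. x \<in> S \<Longrightarrow> y \<in> S \<Longrightarrow> z \<in> S \<Longrightarrow>
        r12 r (r23 r (r12 r (x, y, z))) = r23 r (r12 r (r23 r (x, y, z)))"
    and nd_left: "\<And>x. x \<in> S \<Longrightarrow> bij_betw (\<lambda>y. fst (r (x, y))) S S"
    and nd_right: "\<And>x. x \<in> S \<Longrightarrow> bij_betw (\<lambda>y. snd (r (y, x))) S S"
    using sol by (auto simp: nd_ybe_solution_def ybe_solution_def ybe_nondegenerate_def)
  have closed: "\<And>x y. x \<in> S \<Longrightarrow> y \<in> S \<Longrightarrow> r (x, y) \<in> S \<times> S"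
    using bij by (auto simp: bij_betw_def)
  have "bij_betw r' (S \<times> S) (S \<times> S)"
  proof (rule bij_betw_byWitness[where f' = r])
    show "r' ` (S \<times> S) \<subseteq> S \<times> S" "r ` (S \<times> S) \<subseteq> S \<times> S"
      using closed closed' by (auto simp: image_subset_iff)
  qed (use inv in auto)
  moreover have "bij_betw (\<lambda>v. fst (r' (u, v))) S S" if "u \<in> S" for u
    using bij_betw_fst_inverse[OF nd_left closed closed' inv that] .
  moreover have "bij_betw (\<lambda>u. snd (r' (u, v))) S S" if "v \<in> S" for v
    \<comment> \<open>the mirror image of the previous case, under swapping the two factors\<close>
    using bij_betw_fst_inverse[where r = "\<lambda>(x, y). prod.swap (r (y, x))"
        and r' = "\<lambda>(x, y). prod.swap (r' (y, x))", OF _ _ _ _ _ that]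
      nd_right closed closed' inv
    by (auto simp: mem_Times_iff split: prod.splits)
  ultimately show ?thesis
    using nonempty braid_relation_inverse[OF braid closed closed' inv]
    by (auto simp: nd_ybe_solution_def ybe_solution_def ybe_nondegenerate_def)
qed

section \<open>Solutions from compatible actions on a group\<close>

locale braiding_operator = group H for H (structure) +
  fixes r :: "'a \<times> 'a \<Rightarrow> 'a \<times> 'a"
  assumes r_closed: "\<lbrakk>x \<in> carrier H; y \<in> carrier H\<rbrakk> \<Longrightarrow> r (x, y) \<in> carrier H \<times> carrier H"
    and left_action: "\<lbrakk>x \<in> carrier H; y \<in> carrier H; z \<in> carrier H\<rbrakk> \<Longrightarrow>
      fst (r (x, fst (r (y, z)))) = fst (r (x \<otimes> y, z))"
    and left_one: "z \<in> carrier H \<Longrightarrow> fst (r (\<one>, z)) = z"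
    and right_one: "z \<in> carrier H \<Longrightarrow> snd (r (z, \<one>)) = z"
    and fst_snd_mult: "\<lbrakk>x \<in> carrier H; y \<in> carrier H\<rbrakk> \<Longrightarrow> fst (r (x, y)) \<otimes> snd (r (x, y)) = x \<otimes> y"
    and fst_mult: "\<lbrakk>x \<in> carrier H; y \<in> carrier H; z \<in> carrier H\<rbrakk> \<Longrightarrow>
      fst (r (x, y \<otimes> z)) = fst (r (x, y)) \<otimes> fst (r (snd (r (x, y)), z))"
begin

abbreviation \<sigma> where "\<sigma> x y \<equiv> fst (r (x, y))"
abbreviation \<tau> where "\<tau> y x \<equiv> snd (r (x, y))"

lemma sigma_closed [simp]: "x \<in> carrier H \<Longrightarrow> y \<in> carrier H \<Longrightarrow> \<sigma> x y \<in> carrier H"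
  and tau_closed [simp]: "x \<in> carrier H \<Longrightarrow> y \<in> carrier H \<Longrightarrow> \<tau> y x \<in> carrier H"
  using r_closed by (auto simp: mem_Times_iff)

lemma right_action:
  assumes "x \<in> carrier H" "y \<in> carrier H" "z \<in> carrier H"
  shows "\<tau> z (\<tau> y x) = \<tau> (y \<otimes> z) x"
proof -
  \<comment> \<open>both sides complete \<open>\<sigma> x (y \<otimes> z)\<close> to \<open>x \<otimes> y \<otimes> z\<close>\<close>
  have "\<sigma> x (y \<otimes> z) \<otimes> \<tau> z (\<tau> y x) = \<sigma> x y \<otimes> (\<sigma> (\<tau> y x) z \<otimes> \<tau> z (\<tau> y x))"
    using assms by (simp add: fst_mult m_assoc)
  also have "\<dots> = x \<otimes> (y \<otimes> z)"
    using assms by (simp add: fst_snd_mult flip: m_assoc)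
  also have "\<dots> = \<sigma> x (y \<otimes> z) \<otimes> \<tau> (y \<otimes> z) x"
    using assms by (simp add: fst_snd_mult)
  finally show ?thesis using assms by simp
qed

lemma braid_relation:
  assumes xyz: "x \<in> carrier H" "y \<in> carrier H" "z \<in> carrier H"
  shows "r12 r (r23 r (r12 r (x, y, z))) = r23 r (r12 r (r23 r (x, y, z)))"
proof -
  define a where "a = \<sigma> (\<sigma> x y) (\<sigma> (\<tau> y x) z)"
  define b where "b = \<tau> (\<sigma> (\<tau> y x) z) (\<sigma> x y)"
  define c where "c = \<tau> z (\<tau> y x)"
  define b' where "b' = \<sigma> (\<tau> (\<sigma> y z) x) (\<tau> z y)"
  have lhs: "r12 r (r23 r (r12 r (x, y, z))) = (a, b, c)"
    by (simp add: r12_def r23_def a_def b_def c_def split: prod.split)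
  have rhs: "r23 r (r12 r (r23 r (x, y, z))) = (\<sigma> x (\<sigma> y z), b', \<tau> (\<tau> z y) (\<tau> (\<sigma> y z) x))"
    by (simp add: r12_def r23_def b'_def split: prod.split)
  have a: "a = \<sigma> x (\<sigma> y z)"
    using xyz by (simp add: a_def left_action fst_snd_mult)
  have c: "c = \<tau> (\<tau> z y) (\<tau> (\<sigma> y z) x)"
    using xyz by (simp add: c_def right_action fst_snd_mult)
  \<comment> \<open>the middle entries agree because both triples multiply out to \<open>x \<otimes> y \<otimes> z\<close>\<close>
  have "a \<otimes> b \<otimes> c = \<sigma> x y \<otimes> (\<tau> y x \<otimes> z)"
    using xyz by (simp add: a_def b_def c_def fst_snd_mult m_assoc)
  then have abc: "a \<otimes> b \<otimes> c = x \<otimes> y \<otimes> z"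
    using xyz by (simp add: fst_snd_mult flip: m_assoc)
  have "a \<otimes> b' \<otimes> c = \<sigma> x (\<sigma> y z) \<otimes> (\<tau> (\<sigma> y z) x \<otimes> \<tau> z y)"
    using xyz by (simp add: a c b'_def fst_snd_mult m_assoc)
  also have "\<dots> = x \<otimes> \<sigma> y z \<otimes> \<tau> z y"
    using xyz by (simp add: fst_snd_mult flip: m_assoc)
  also have "\<dots> = x \<otimes> y \<otimes> z"
    using xyz by (simp add: fst_snd_mult m_assoc)
  finally have "a \<otimes> b' \<otimes> c = a \<otimes> b \<otimes> c"
    using abc by simp
  moreover have "a \<in> carrier H" "b \<in> carrier H" "b' \<in> carrier H" "c \<in> carrier H"
    using xyz by (simp_all add: a_def b_def b'_def c_def)
  ultimately have "b = b'" by simp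
  with lhs rhs a c show ?thesis by simp
qed

lemma nondegenerate: "ybe_nondegenerate (carrier H) r"
proof -
  have "bij_betw (\<sigma> x) (carrier H) (carrier H)" if "x \<in> carrier H" for x
    by (rule bij_betw_byWitness[where f' = "\<sigma> (inv x)"])
      (use that in \<open>auto simp: left_action left_one\<close>)
  moreover have "bij_betw (\<lambda>y. \<tau> x y) (carrier H) (carrier H)" if "x \<in> carrier H" for x
    by (rule bij_betw_byWitness[where f' = "\<lambda>y. \<tau> (inv x) y"])
      (use that in \<open>auto simp: right_action right_one\<close>)
  ultimately show ?thesis by (simp add: ybe_nondegenerate_def)
qed

end

lemma (in group) mult_inv_cancel_left [simp]:
  "x \<in> carrier G \<Longrightarrow> y \<in> carrier G \<Longrightarrow> x \<otimes> (inv x \<otimes> y) = y"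
  "x \<in> carrier G \<Longrightarrow> y \<in> carrier G \<Longrightarrow> inv x \<otimes> (x \<otimes> y) = y"
  by (simp_all flip: m_assoc)

lemma (in group) center_closed: "k \<in> grp_center G \<Longrightarrow> k \<in> carrier G"
  and center_commute: "k \<in> grp_center G \<Longrightarrow> x \<in> carrier G \<Longrightarrow> k \<otimes> x = x \<otimes> k"
  by (simp_all add: grp_center_def)

lemma (in group) center_mult:
  assumes a: "a \<in> grp_center G" and b: "b \<in> grp_center G"
  shows "a \<otimes> b \<in> grp_center G"
proof -
  have carr: "a \<in> carrier G" "b \<in> carrier G" using a b by (simp_all add: center_closed)
  have "a \<otimes> b \<otimes> x = x \<otimes> (a \<otimes> b)" if x: "x \<in> carrier G" for x
  proof -
    have "a \<otimes> b \<otimes> x = a \<otimes> (x \<otimes> b)" using carr x center_commute[OF b x] by (simp add: m_assoc)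
    also have "\<dots> = (x \<otimes> a) \<otimes> b" using carr x center_commute[OF a x] by (simp flip: m_assoc)
    also have "\<dots> = x \<otimes> (a \<otimes> b)" using carr x by (simp add: m_assoc)
    finally show ?thesis .
  qed
  then show ?thesis using carr by (simp add: grp_center_def)
qed

lemma (in group) center_inv:
  assumes a: "a \<in> grp_center G"
  shows "inv a \<in> grp_center G"
proof -
  have carr: "a \<in> carrier G" using a by (rule center_closed)
  have "inv a \<otimes> x = x \<otimes> inv a" if x: "x \<in> carrier G" for x
  proof -
    have "inv a \<otimes> x = inv a \<otimes> (x \<otimes> a) \<otimes> inv a" using carr x by (simp add: m_assoc)
    also have "\<dots> = inv a \<otimes> (a \<otimes> x) \<otimes> inv a" using center_commute[OF a x] by simp
    also have "\<dots> = x \<otimes> inv a" using carr x by (simp flip: m_assoc)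
    finally show ?thesis .
  qed
  then show ?thesis using carr by (simp add: grp_center_def)
qed

lemma (in group) conj_central_factor:
  assumes k: "k \<in> grp_center G" and carr: "a \<in> carrier G" "b \<in> carrier G" "z \<in> carrier G"
    and c: "c = a \<otimes> k \<otimes> b"
  shows "c \<otimes> z \<otimes> inv c = a \<otimes> b \<otimes> z \<otimes> inv (a \<otimes> b)"
proof -
  have kc: "k \<in> carrier G" using k by (rule center_closed)
  have "c \<otimes> z \<otimes> inv c = a \<otimes> (k \<otimes> (b \<otimes> z \<otimes> inv b)) \<otimes> inv k \<otimes> inv a"
    using carr kc by (simp add: c m_assoc inv_mult_group)
  also have "k \<otimes> (b \<otimes> z \<otimes> inv b) = (b \<otimes> z \<otimes> inv b) \<otimes> k"
    using carr by (intro center_commute[OF k]) simp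
  also have "a \<otimes> ((b \<otimes> z \<otimes> inv b) \<otimes> k) \<otimes> inv k \<otimes> inv a = a \<otimes> b \<otimes> z \<otimes> inv (a \<otimes> b)"
    using carr kc by (simp add: m_assoc inv_mult_group)
  finally show ?thesis .
qed

lemma psi_commutator_central:
  assumes "\<psi> ` comm_subgroup G A B \<subseteq> grp_center G" "a \<in> A" "b \<in> B"
  shows "\<psi> (a \<otimes>\<^bsub>G\<^esub> b \<otimes>\<^bsub>G\<^esub> inv\<^bsub>G\<^esub> a \<otimes>\<^bsub>G\<^esub> inv\<^bsub>G\<^esub> b) \<in> grp_center G"
proof -
  have "a \<otimes>\<^bsub>G\<^esub> b \<otimes>\<^bsub>G\<^esub> inv\<^bsub>G\<^esub> a \<otimes>\<^bsub>G\<^esub> inv\<^bsub>G\<^esub> b \<in> comm_subgroup G A B"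
    unfolding comm_subgroup_def by (rule generate.incl) (use assms in blast)
  then show ?thesis using assms(1) by blast
qed


locale group_endo = group G for G (structure) +
  fixes \<psi> :: "'a \<Rightarrow> 'a"
  assumes psi_hom: "\<psi> \<in> hom G G"

sublocale group_endo \<subseteq> group_hom G G \<psi>
  by (unfold_locales) (rule psi_hom)

context group_endo
begin

lemmas group_simps = m_assoc inv_mult_group

lemma yb_r1_closed: "\<lbrakk>x \<in> carrier G; y \<in> carrier G\<rbrakk> \<Longrightarrow> yb_r1 G \<psi> (x, y) \<in> carrier G \<times> carrier G"
  and yb_r2_closed: "\<lbrakk>x \<in> carrier G; y \<in> carrier G\<rbrakk> \<Longrightarrow> yb_r2 G \<psi> (x, y) \<in> carrier G \<times> carrier G"
  and yb_r3_closed: "\<lbrakk>x \<in> carrier G; y \<in> carrier G\<rbrakk> \<Longrightarrow> yb_r3 G \<psi> (x, y) \<in> carrier G \<times> carrier G"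
  and yb_r4_closed: "\<lbrakk>x \<in> carrier G; y \<in> carrier G\<rbrakk> \<Longrightarrow> yb_r4 G \<psi> (x, y) \<in> carrier G \<times> carrier G"
  by (simp_all add: yb_r1_def yb_r2_def yb_r3_def yb_r4_def)

lemma yb_r1_eq_yb_r2_iff_comm_group:
  "(\<forall>g\<in>carrier G. \<forall>h\<in>carrier G. yb_r1 G \<psi> (g, h) = yb_r2 G \<psi> (g, h)) \<longleftrightarrow> comm_group G"
proof
  assume eq: "\<forall>g\<in>carrier G. \<forall>h\<in>carrier G. yb_r1 G \<psi> (g, h) = yb_r2 G \<psi> (g, h)"
  show "comm_group G"
  proof (rule group_comm_groupI)
    fix x y assume xy: "x \<in> carrier G" "y \<in> carrier G"
    define h where "h = inv (\<psi> x) \<otimes> y \<otimes> \<psi> x"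
    have "fst (yb_r1 G \<psi> (x, h)) = fst (yb_r2 G \<psi> (x, h))"
      using eq xy by (simp add: h_def)
    then have "y = x \<otimes> y \<otimes> inv x"
      using xy by (simp add: h_def yb_r1_def yb_r2_def group_simps)
    then have "y \<otimes> x = x \<otimes> y \<otimes> inv x \<otimes> x" by simp
    then show "x \<otimes> y = y \<otimes> x" using xy by (simp add: m_assoc)
  qed
next
  assume comm: "comm_group G"
  then have comm_mult: "a \<otimes> b = b \<otimes> a" if "a \<in> carrier G" "b \<in> carrier G" for a b
    using that by (simp add: comm_group_def comm_monoid.m_comm)
  have conj: "a \<otimes> b \<otimes> inv a = b" "inv a \<otimes> b \<otimes> a = b"
    if "a \<in> carrier G" "b \<in> carrier G" for a b
    using that comm_mult[of a b] comm_mult[of "inv a" b] by (simp_all add: m_assoc)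
  show "\<forall>g\<in>carrier G. \<forall>h\<in>carrier G. yb_r1 G \<psi> (g, h) = yb_r2 G \<psi> (g, h)"
  proof (intro ballI)
    fix g h assume gh: "g \<in> carrier G" "h \<in> carrier G"
    have "yb_r1 G \<psi> (g, h) = (\<psi> g \<otimes> h \<otimes> inv (\<psi> g),
        inv (\<psi> h) \<otimes> (\<psi> g \<otimes> (inv h \<otimes> (inv (\<psi> g) \<otimes> g \<otimes> \<psi> g) \<otimes> h) \<otimes> inv (\<psi> g)) \<otimes> \<psi> h)"
      using gh by (simp add: yb_r1_def group_simps)
    also have "\<dots> = (h, g)" using gh by (simp add: conj)
    also have "\<dots> = (g \<otimes> (\<psi> g \<otimes> h \<otimes> inv (\<psi> g)) \<otimes> inv g,
        \<psi> g \<otimes> inv (\<psi> h) \<otimes> inv (\<psi> g) \<otimes> g \<otimes> inv (\<psi> g \<otimes> inv (\<psi> h) \<otimes> inv (\<psi> g)))"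
      using gh by (simp add: conj)
    also have "\<dots> = yb_r2 G \<psi> (g, h)" using gh by (simp add: yb_r2_def group_simps)
    finally show "yb_r1 G \<psi> (g, h) = yb_r2 G \<psi> (g, h)" .
  qed
qed

lemma yb_r3_eq_yb_r4_iff:
  "(\<forall>g\<in>carrier G. \<forall>h\<in>carrier G. yb_r3 G \<psi> (g, h) = yb_r4 G \<psi> (g, h))
   \<longleftrightarrow> (\<forall>g\<in>carrier G. \<forall>h\<in>carrier G.
         g \<otimes> \<psi> g \<otimes> h \<otimes> inv (\<psi> g) = h \<otimes> \<psi> h \<otimes> g \<otimes> inv (\<psi> h))"
proof
  assume eq: "\<forall>g\<in>carrier G. \<forall>h\<in>carrier G. yb_r3 G \<psi> (g, h) = yb_r4 G \<psi> (g, h)"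
  show "\<forall>g\<in>carrier G. \<forall>h\<in>carrier G. g \<otimes> \<psi> g \<otimes> h \<otimes> inv (\<psi> g) = h \<otimes> \<psi> h \<otimes> g \<otimes> inv (\<psi> h)"
  proof (intro ballI)
    fix a b assume ab: "a \<in> carrier G" "b \<in> carrier G"
    have "fst (yb_r3 G \<psi> (inv b, a)) = fst (yb_r4 G \<psi> (inv b, a))" using eq ab by simp
    then have e: "\<psi> b \<otimes> a \<otimes> inv (\<psi> b) = inv b \<otimes> a \<otimes> \<psi> a \<otimes> b \<otimes> inv (\<psi> a)"
      using ab by (simp add: yb_r3_def yb_r4_def)
    have "a \<otimes> \<psi> a \<otimes> b \<otimes> inv (\<psi> a) = b \<otimes> (inv b \<otimes> a \<otimes> \<psi> a \<otimes> b \<otimes> inv (\<psi> a))"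
      using ab by (simp add: group_simps)
    also have "\<dots> = b \<otimes> (\<psi> b \<otimes> a \<otimes> inv (\<psi> b))" by (simp only: e)
    finally show "a \<otimes> \<psi> a \<otimes> b \<otimes> inv (\<psi> a) = b \<otimes> \<psi> b \<otimes> a \<otimes> inv (\<psi> b)"
      using ab by (simp add: group_simps)
  qed
next
  assume eq: "\<forall>g\<in>carrier G. \<forall>h\<in>carrier G. g \<otimes> \<psi> g \<otimes> h \<otimes> inv (\<psi> g) = h \<otimes> \<psi> h \<otimes> g \<otimes> inv (\<psi> h)"
  show "\<forall>g\<in>carrier G. \<forall>h\<in>carrier G. yb_r3 G \<psi> (g, h) = yb_r4 G \<psi> (g, h)"
  proof (intro ballI)
    fix g h assume gh: "g \<in> carrier G" "h \<in> carrier G"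
    have e1: "h \<otimes> \<psi> h \<otimes> inv g \<otimes> inv (\<psi> h) = inv g \<otimes> \<psi> (inv g) \<otimes> h \<otimes> inv (\<psi> (inv g))"
      using eq[rule_format, of h "inv g"] gh by simp
    have "fst (yb_r4 G \<psi> (g, h)) = g \<otimes> (h \<otimes> \<psi> h \<otimes> inv g \<otimes> inv (\<psi> h))"
      using gh by (simp add: yb_r4_def group_simps)
    also have "\<dots> = g \<otimes> (inv g \<otimes> \<psi> (inv g) \<otimes> h \<otimes> inv (\<psi> (inv g)))" by (simp only: e1)
    also have "\<dots> = fst (yb_r3 G \<psi> (g, h))" using gh by (simp add: yb_r3_def group_simps)
    finally have fst_eq: "fst (yb_r3 G \<psi> (g, h)) = fst (yb_r4 G \<psi> (g, h))" ..
    define L where "L = g \<otimes> \<psi> g \<otimes> (g \<otimes> h) \<otimes> inv (\<psi> g)"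
    define R where "R = (g \<otimes> h) \<otimes> \<psi> (g \<otimes> h) \<otimes> g \<otimes> inv (\<psi> (g \<otimes> h))"
    have e2: "L = R" using eq gh by (simp add: L_def R_def del: hom_mult)
    have "snd (yb_r3 G \<psi> (g, h)) = inv (\<psi> g) \<otimes> inv h \<otimes> inv g \<otimes> L \<otimes> \<psi> g"
      using gh by (simp add: yb_r3_def L_def group_simps)
    also have "\<dots> = inv (\<psi> g) \<otimes> inv h \<otimes> inv g \<otimes> R \<otimes> \<psi> g" by (simp only: e2)
    also have "\<dots> = snd (yb_r4 G \<psi> (g, h))" using gh by (simp add: yb_r4_def R_def group_simps)
    finally show "yb_r3 G \<psi> (g, h) = yb_r4 G \<psi> (g, h)" using fst_eq by (simp add: prod_eq_iff)
  qed
qed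

end

section \<open>The solutions r1 and r2\<close>

locale psi_central_endo = group_endo +
  assumes psi_comm_psi_central:
    "\<lbrakk>a \<in> carrier G; b \<in> carrier G\<rbrakk> \<Longrightarrow> \<psi> (\<psi> a \<otimes> b \<otimes> inv (\<psi> a) \<otimes> inv b) \<in> grp_center G"
begin

lemma comm_psi2_psi_central:
  "\<lbrakk>a \<in> carrier G; b \<in> carrier G\<rbrakk> \<Longrightarrow>
    \<psi> (\<psi> a) \<otimes> \<psi> b \<otimes> inv (\<psi> (\<psi> a)) \<otimes> inv (\<psi> b) \<in> grp_center G"
  using psi_comm_psi_central by simp

definition circ :: "'a \<Rightarrow> 'a \<Rightarrow> 'a" where
  "circ x y = x \<otimes> \<psi> x \<otimes> y \<otimes> inv (\<psi> x)"

lemma circ_closed [simp]: "\<lbrakk>x \<in> carrier G; y \<in> carrier G\<rbrakk> \<Longrightarrow> circ x y \<in> carrier G"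
  by (simp add: circ_def)

lemma circ_one [simp]: "x \<in> carrier G \<Longrightarrow> circ \<one> x = x" "x \<in> carrier G \<Longrightarrow> circ x \<one> = x"
  by (simp_all add: circ_def group_simps)

lemma circ_left_cancel:
  "\<lbrakk>a \<in> carrier G; b \<in> carrier G; c \<in> carrier G; circ a b = circ a c\<rbrakk> \<Longrightarrow> b = c"
  by (simp add: circ_def)

lemma conj_psi_circ:
  assumes "x \<in> carrier G" "y \<in> carrier G" "z \<in> carrier G"
  shows "\<psi> (circ x y) \<otimes> z \<otimes> inv (\<psi> (circ x y)) = \<psi> x \<otimes> \<psi> y \<otimes> z \<otimes> inv (\<psi> x \<otimes> \<psi> y)"
  by (rule conj_central_factor[OF comm_psi2_psi_central[of x y]])
    (use assms in \<open>simp_all add: circ_def group_simps\<close>)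

lemma circ_assoc:
  assumes "x \<in> carrier G" "y \<in> carrier G" "z \<in> carrier G"
  shows "circ (circ x y) z = circ x (circ y z)"
proof -
  have "circ (circ x y) z = circ x y \<otimes> (\<psi> (circ x y) \<otimes> z \<otimes> inv (\<psi> (circ x y)))"
    using assms by (simp add: circ_def[of "circ x y"] m_assoc)
  also have "\<dots> = circ x y \<otimes> (\<psi> x \<otimes> \<psi> y \<otimes> z \<otimes> inv (\<psi> x \<otimes> \<psi> y))"
    using assms by (simp add: conj_psi_circ)
  also have "\<dots> = circ x (circ y z)"
    using assms by (simp add: circ_def group_simps)
  finally show ?thesis .
qed

lemma circ_group: "group \<lparr>carrier = carrier G, monoid.mult = circ, one = \<one>\<rparr>"
proof (rule groupI, simp_all add: circ_assoc)
  fix x assume x: "x \<in> carrier G"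
  define y where "y = inv (\<psi> x) \<otimes> inv x \<otimes> \<psi> x"
  define z where "z = inv (\<psi> y) \<otimes> inv y \<otimes> \<psi> y"
  have yz: "y \<in> carrier G" "z \<in> carrier G" using x by (simp_all add: y_def z_def)
  have xy: "circ x y = \<one>" using x by (simp add: y_def circ_def group_simps)
  have yz_one: "circ y z = \<one>" using yz by (simp add: z_def circ_def group_simps)
  \<comment> \<open>a right inverse of a right inverse is the original element\<close>
  have "x = circ x (circ y z)" using x by (simp add: yz_one)
  also have "\<dots> = z" using x yz by (simp add: xy flip: circ_assoc)
  finally have "circ y x = \<one>" using yz_one by simp
  then show "\<exists>y\<in>carrier G. circ y x = \<one>" using yz by blast
qed

abbreviation s1 where "s1 x y \<equiv> fst (yb_r1 G \<psi> (x, y))"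
abbreviation t1 where "t1 y x \<equiv> snd (yb_r1 G \<psi> (x, y))"
abbreviation s2 where "s2 x y \<equiv> fst (yb_r2 G \<psi> (x, y))"
abbreviation t2 where "t2 y x \<equiv> snd (yb_r2 G \<psi> (x, y))"

lemma s1_eq: "s1 x y = \<psi> x \<otimes> y \<otimes> inv (\<psi> x)"
  by (simp add: yb_r1_def)

lemma s1_closed [simp]: "\<lbrakk>x \<in> carrier G; y \<in> carrier G\<rbrakk> \<Longrightarrow> s1 x y \<in> carrier G"
  and t1_closed [simp]: "\<lbrakk>x \<in> carrier G; y \<in> carrier G\<rbrakk> \<Longrightarrow> t1 y x \<in> carrier G"
  and s2_closed [simp]: "\<lbrakk>x \<in> carrier G; y \<in> carrier G\<rbrakk> \<Longrightarrow> s2 x y \<in> carrier G"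
  and t2_closed [simp]: "\<lbrakk>x \<in> carrier G; y \<in> carrier G\<rbrakk> \<Longrightarrow> t2 y x \<in> carrier G"
  by (simp_all add: yb_r1_def yb_r2_def)

lemma s1_s1:
  assumes "x \<in> carrier G" "y \<in> carrier G" "z \<in> carrier G"
  shows "s1 x (s1 y z) = s1 (circ x y) z"
proof -
  have "s1 (circ x y) z = \<psi> x \<otimes> \<psi> y \<otimes> z \<otimes> inv (\<psi> x \<otimes> \<psi> y)"
    unfolding s1_eq by (rule conj_psi_circ[OF assms])
  then show ?thesis using assms by (simp add: s1_eq group_simps)
qed

lemma circ_s1_t1:
  assumes xy: "x \<in> carrier G" "y \<in> carrier G"
  shows "circ (s1 x y) (t1 y x) = circ x y"
proof -
  define u where "u = s1 x y"
  define w where "w = inv (\<psi> y) \<otimes> \<psi> x \<otimes> inv y \<otimes> inv (\<psi> x)"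
  have u: "u \<in> carrier G" and w: "w \<in> carrier G" using xy by (simp_all add: u_def w_def)
  have t1: "t1 y x = w \<otimes> x \<otimes> inv w" using xy by (simp add: w_def yb_r1_def group_simps)
  have "circ u (t1 y x) = u \<otimes> ((\<psi> u \<otimes> w) \<otimes> x \<otimes> inv (\<psi> u \<otimes> w))"
    using xy u w by (simp add: circ_def t1 group_simps)
  also have "(\<psi> u \<otimes> w) \<otimes> x \<otimes> inv (\<psi> u \<otimes> w) = \<one> \<otimes> inv u \<otimes> x \<otimes> inv (\<one> \<otimes> inv u)"
    by (rule conj_central_factor[OF comm_psi2_psi_central[of x y]])
      (use xy in \<open>simp_all add: u_def w_def s1_eq group_simps\<close>)
  also have "u \<otimes> (\<one> \<otimes> inv u \<otimes> x \<otimes> inv (\<one> \<otimes> inv u)) = circ x y"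
    using xy by (simp add: u_def s1_eq circ_def group_simps)
  finally show ?thesis by (simp add: u_def)
qed

lemma s1_circ:
  assumes xyz: "x \<in> carrier G" "y \<in> carrier G" "z \<in> carrier G"
  shows "s1 x (circ y z) = circ (s1 x y) (s1 (t1 y x) z)"
proof -
  define u where "u = s1 x y"
  define v where "v = t1 y x"
  have uv: "u \<in> carrier G" "v \<in> carrier G" using xyz by (simp_all add: u_def v_def)
  have "s1 x (circ y z) = u \<otimes> s1 x (s1 y z)"
    using xyz by (simp add: u_def s1_eq circ_def group_simps)
  also have "\<dots> = u \<otimes> s1 (circ u v) z"
    using xyz by (simp add: s1_s1 circ_s1_t1 u_def v_def)
  also have "\<dots> = u \<otimes> s1 u (s1 v z)"
    using xyz uv by (simp add: s1_s1)
  also have "\<dots> = circ u (s1 v z)"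
    using xyz uv by (simp add: s1_eq circ_def group_simps)
  finally show ?thesis by (simp add: u_def v_def)
qed

lemma s1_s2_t2:
  assumes ab: "a \<in> carrier G" "b \<in> carrier G"
  shows "s1 (s2 a b) (t2 b a) = a"
proof -
  define p where "p = s2 a b"
  define w where "w = \<psi> a \<otimes> inv (\<psi> b) \<otimes> inv (\<psi> a)"
  have p: "p \<in> carrier G" and w: "w \<in> carrier G" using ab by (simp_all add: p_def w_def)
  have t2: "t2 b a = w \<otimes> a \<otimes> inv w" using ab by (simp add: w_def yb_r2_def group_simps)
  have "s1 p (t2 b a) = (\<psi> p \<otimes> w) \<otimes> a \<otimes> inv (\<psi> p \<otimes> w)"
    using ab p w by (simp add: s1_eq t2 group_simps)
  also have "\<dots> = \<psi> a \<otimes> inv (\<psi> a) \<otimes> a \<otimes> inv (\<psi> a \<otimes> inv (\<psi> a))"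
    by (rule conj_central_factor[OF comm_psi2_psi_central[of a b]])
      (use ab in \<open>simp_all add: p_def w_def yb_r2_def group_simps\<close>)
  also have "\<dots> = a" using ab by simp
  finally show ?thesis by (simp add: p_def)
qed

lemma circ_s2_t2:
  assumes ab: "a \<in> carrier G" "b \<in> carrier G"
  shows "circ (s2 a b) (t2 b a) = circ a b"
proof -
  define p where "p = s2 a b"
  have p: "p \<in> carrier G" using ab by (simp add: p_def)
  have "circ p (t2 b a) = p \<otimes> s1 p (t2 b a)"
    using ab p by (simp add: circ_def s1_eq group_simps)
  also have "\<dots> = p \<otimes> a" using s1_s2_t2[OF ab] by (simp add: p_def)
  also have "\<dots> = circ a b" using ab by (simp add: p_def circ_def yb_r2_def group_simps)
  finally show ?thesis by (simp add: p_def)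
qed

lemma yb_r1_yb_r2:
  assumes ab: "a \<in> carrier G" "b \<in> carrier G"
  shows "yb_r1 G \<psi> (yb_r2 G \<psi> (a, b)) = (a, b)"
proof -
  define p where "p = s2 a b"
  define q where "q = t2 b a"
  have pq: "p \<in> carrier G" "q \<in> carrier G" using ab by (simp_all add: p_def q_def)
  have r2: "yb_r2 G \<psi> (a, b) = (p, q)" by (simp add: p_def q_def)
  have fst: "s1 p q = a" using s1_s2_t2[OF ab] by (simp add: p_def q_def)
  \<comment> \<open>both maps preserve \<open>circ\<close>-products, and \<open>circ a\<close> is injective\<close>
  have "circ a (t1 q p) = circ (s1 p q) (t1 q p)" by (simp only: fst)
  also have "\<dots> = circ p q" by (rule circ_s1_t1[OF pq])
  also have "\<dots> = circ a b" unfolding p_def q_def by (rule circ_s2_t2[OF ab])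
  finally have "t1 q p = b" using ab pq by (auto intro: circ_left_cancel)
  then show ?thesis using fst by (simp add: r2 prod_eq_iff)
qed

lemma yb_r2_yb_r1:
  assumes xy: "x \<in> carrier G" "y \<in> carrier G"
  shows "yb_r2 G \<psi> (yb_r1 G \<psi> (x, y)) = (x, y)"
proof -
  define u where "u = s1 x y"
  define v where "v = t1 y x"
  have uv: "u \<in> carrier G" "v \<in> carrier G" using xy by (simp_all add: u_def v_def)
  have r1: "yb_r1 G \<psi> (x, y) = (u, v)" by (simp add: u_def v_def)
  have "s2 u v = circ u v \<otimes> inv u" using uv by (simp add: yb_r2_def circ_def group_simps)
  also have "\<dots> = x"
    using circ_s1_t1[OF xy] xy by (simp add: u_def v_def s1_eq circ_def group_simps)
  finally have fst: "s2 u v = x" .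
  have "circ x (t2 v u) = circ (s2 u v) (t2 v u)" by (simp only: fst)
  also have "\<dots> = circ u v" by (rule circ_s2_t2[OF uv])
  also have "\<dots> = circ x y" unfolding u_def v_def by (rule circ_s1_t1[OF xy])
  finally have "t2 v u = y" using xy uv by (auto intro: circ_left_cancel)
  then show ?thesis using fst by (simp add: r1 prod_eq_iff)
qed

lemma braiding_operator_yb_r1:
  "braiding_operator \<lparr>carrier = carrier G, monoid.mult = circ, one = \<one>\<rparr> (yb_r1 G \<psi>)"
proof (intro braiding_operator.intro circ_group braiding_operator_axioms.intro, simp_all)
  show "\<And>x y. \<lbrakk>x \<in> carrier G; y \<in> carrier G\<rbrakk> \<Longrightarrow> yb_r1 G \<psi> (x, y) \<in> carrier G \<times> carrier G"
    by (rule yb_r1_closed)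
qed (simp_all add: s1_s1 circ_s1_t1 s1_circ, simp_all add: yb_r1_def group_simps)

lemma nd_ybe_solution_yb_r1: "nd_ybe_solution (carrier G) (yb_r1 G \<psi>)"
proof -
  interpret r1: braiding_operator "\<lparr>carrier = carrier G, monoid.mult = circ, one = \<one>\<rparr>" "yb_r1 G \<psi>"
    by (rule braiding_operator_yb_r1)
  have "bij_betw (yb_r1 G \<psi>) (carrier G \<times> carrier G) (carrier G \<times> carrier G)"
    by (rule bij_betw_byWitness[where f' = "yb_r2 G \<psi>"])
      (auto simp: yb_r1_yb_r2 yb_r2_yb_r1 image_subset_iff yb_r1_closed yb_r2_closed)
  then show ?thesis
    using r1.braid_relation r1.nondegenerate
    by (auto simp: nd_ybe_solution_def ybe_solution_def)
qed

lemma nd_ybe_solution_yb_r2: "nd_ybe_solution (carrier G) (yb_r2 G \<psi>)"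
  by (rule nd_ybe_solution_inverse[OF nd_ybe_solution_yb_r1])
    (simp_all add: yb_r2_closed yb_r1_yb_r2 yb_r2_yb_r1)

end

section \<open>The solutions r3 and r4\<close>

locale psi_central_endo_strong = group_endo +
  assumes psi_comm_central:
    "\<lbrakk>a \<in> carrier G; b \<in> carrier G\<rbrakk> \<Longrightarrow> \<psi> (a \<otimes> b \<otimes> inv a \<otimes> inv b) \<in> grp_center G"

sublocale psi_central_endo_strong \<subseteq> psi_central_endo
  by unfold_locales (intro psi_comm_central, simp_all)

context psi_central_endo_strong
begin

lemma comm_psi_psi_central:
  "\<lbrakk>a \<in> carrier G; b \<in> carrier G\<rbrakk> \<Longrightarrow> \<psi> a \<otimes> \<psi> b \<otimes> inv (\<psi> a) \<otimes> inv (\<psi> b) \<in> grp_center G"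
  using psi_comm_central by simp

abbreviation s3 where "s3 x y \<equiv> fst (yb_r3 G \<psi> (x, y))"
abbreviation t3 where "t3 y x \<equiv> snd (yb_r3 G \<psi> (x, y))"
abbreviation s4 where "s4 x y \<equiv> fst (yb_r4 G \<psi> (x, y))"
abbreviation t4 where "t4 y x \<equiv> snd (yb_r4 G \<psi> (x, y))"

lemma s3_closed [simp]: "\<lbrakk>x \<in> carrier G; y \<in> carrier G\<rbrakk> \<Longrightarrow> s3 x y \<in> carrier G"
  and t3_closed [simp]: "\<lbrakk>x \<in> carrier G; y \<in> carrier G\<rbrakk> \<Longrightarrow> t3 y x \<in> carrier G"
  and s4_closed [simp]: "\<lbrakk>x \<in> carrier G; y \<in> carrier G\<rbrakk> \<Longrightarrow> s4 x y \<in> carrier G"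
  and t4_closed [simp]: "\<lbrakk>x \<in> carrier G; y \<in> carrier G\<rbrakk> \<Longrightarrow> t4 y x \<in> carrier G"
  by (simp_all add: yb_r3_def yb_r4_def)

lemma s3_t3_mult: "\<lbrakk>x \<in> carrier G; y \<in> carrier G\<rbrakk> \<Longrightarrow> s3 x y \<otimes> t3 y x = x \<otimes> y"
  and s4_t4_mult: "\<lbrakk>x \<in> carrier G; y \<in> carrier G\<rbrakk> \<Longrightarrow> s4 x y \<otimes> t4 y x = x \<otimes> y"
  by (simp_all add: yb_r3_def yb_r4_def group_simps)

lemma s3_s3:
  assumes xyz: "x \<in> carrier G" "y \<in> carrier G" "z \<in> carrier G"
  shows "s3 x (s3 y z) = s3 (x \<otimes> y) z"
proof -
  have "s3 (x \<otimes> y) z = inv (\<psi> x \<otimes> \<psi> y) \<otimes> z \<otimes> inv (inv (\<psi> x \<otimes> \<psi> y))"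
    using xyz by (simp add: yb_r3_def group_simps)
  also have "\<dots> = inv (\<psi> x) \<otimes> inv (\<psi> y) \<otimes> \<one> \<otimes> z \<otimes> inv (inv (\<psi> x) \<otimes> inv (\<psi> y) \<otimes> \<one>)"
    by (rule conj_central_factor[OF comm_psi_psi_central[of y x]]) (use xyz in \<open>simp_all add: group_simps\<close>)
  also have "\<dots> = s3 x (s3 y z)" using xyz by (simp add: yb_r3_def group_simps)
  finally show ?thesis by simp
qed

lemma psi_t3:
  assumes xy: "x \<in> carrier G" "y \<in> carrier G"
  obtains k where "k \<in> grp_center G" "\<psi> (t3 y x) = k \<otimes> \<psi> x"
proof
  show "(\<psi> (inv (\<psi> x)) \<otimes> \<psi> (inv y) \<otimes> inv (\<psi> (inv (\<psi> x))) \<otimes> inv (\<psi> (inv y)))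
      \<otimes> (\<psi> (inv y) \<otimes> \<psi> x \<otimes> inv (\<psi> (inv y)) \<otimes> inv (\<psi> x)) \<in> grp_center G"
    using xy by (intro center_mult comm_psi_psi_central) auto
  show "\<psi> (t3 y x) = (\<psi> (inv (\<psi> x)) \<otimes> \<psi> (inv y) \<otimes> inv (\<psi> (inv (\<psi> x))) \<otimes> inv (\<psi> (inv y)))
      \<otimes> (\<psi> (inv y) \<otimes> \<psi> x \<otimes> inv (\<psi> (inv y)) \<otimes> inv (\<psi> x)) \<otimes> \<psi> x"
    using xy by (simp add: yb_r3_def group_simps)
qed

lemma s3_t3:
  assumes xyz: "x \<in> carrier G" "y \<in> carrier G" "z \<in> carrier G"
  shows "s3 (t3 y x) z = inv (\<psi> x) \<otimes> z \<otimes> \<psi> x"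
proof -
  obtain k where k: "k \<in> grp_center G" and psi: "\<psi> (t3 y x) = k \<otimes> \<psi> x"
    using psi_t3[OF xyz(1,2)] .
  have kc: "k \<in> carrier G" using k by (rule center_closed)
  have "s3 (t3 y x) z = inv (\<psi> (t3 y x)) \<otimes> z \<otimes> inv (inv (\<psi> (t3 y x)))"
    using xyz by (simp add: yb_r3_def del: hom_mult hom_inv)
  also have "\<dots> = inv (\<psi> x) \<otimes> \<one> \<otimes> z \<otimes> inv (inv (\<psi> x) \<otimes> \<one>)"
    by (rule conj_central_factor[OF center_inv[OF k]]) (use xyz kc in \<open>simp_all add: psi group_simps\<close>)
  also have "\<dots> = inv (\<psi> x) \<otimes> z \<otimes> \<psi> x" using xyz by (simp add: group_simps)
  finally show ?thesis .
qed

lemma s3_mult: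
  "\<lbrakk>x \<in> carrier G; y \<in> carrier G; z \<in> carrier G\<rbrakk> \<Longrightarrow> s3 x (y \<otimes> z) = s3 x y \<otimes> s3 (t3 y x) z"
  by (simp add: s3_t3) (simp add: yb_r3_def group_simps)

lemma yb_r3_yb_r4:
  assumes xy: "x \<in> carrier G" "y \<in> carrier G"
  shows "yb_r3 G \<psi> (yb_r4 G \<psi> (x, y)) = (x, y)"
proof -
  define u where "u = s4 x y"
  define v where "v = t4 y x"
  have uv: "u \<in> carrier G" "v \<in> carrier G" using xy by (simp_all add: u_def v_def)
  have r4: "yb_r4 G \<psi> (x, y) = (u, v)" by (simp add: u_def v_def)
  define c where "c = inv (\<psi> u) \<otimes> \<psi> y"
  have "s3 u v = c \<otimes> x \<otimes> inv c"
    using xy uv by (simp add: c_def v_def yb_r3_def yb_r4_def group_simps del: hom_mult hom_inv)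
  \<comment> \<open>two central factors are removed from the conjugator, leaving \<open>\<one>\<close>\<close>
  also have "\<dots> = \<psi> x \<otimes> (inv (\<psi> y) \<otimes> inv (\<psi> x) \<otimes> \<psi> y) \<otimes> x
      \<otimes> inv (\<psi> x \<otimes> (inv (\<psi> y) \<otimes> inv (\<psi> x) \<otimes> \<psi> y))"
    by (rule conj_central_factor[OF center_inv[OF comm_psi2_psi_central[of y "inv x"]]])
      (use xy in \<open>simp_all add: c_def u_def yb_r4_def group_simps\<close>)
  also have "\<dots> = \<one> \<otimes> \<one> \<otimes> x \<otimes> inv (\<one> \<otimes> \<one>)"
    by (rule conj_central_factor[OF comm_psi_psi_central[of x "inv y"]]) (use xy in \<open>simp_all add: group_simps\<close>)
  also have "\<dots> = x" using xy by simp
  finally have fst: "s3 u v = x" .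
  \<comment> \<open>both maps preserve products, so the second coordinate is determined by the first\<close>
  have "x \<otimes> t3 v u = s3 u v \<otimes> t3 v u" by (simp only: fst)
  also have "\<dots> = u \<otimes> v" by (rule s3_t3_mult[OF uv])
  also have "\<dots> = x \<otimes> y" unfolding u_def v_def by (rule s4_t4_mult[OF xy])
  finally have "t3 v u = y" using xy uv by simp
  then show ?thesis using fst by (simp add: r4 prod_eq_iff)
qed

lemma yb_r4_yb_r3:
  assumes xy: "x \<in> carrier G" "y \<in> carrier G"
  shows "yb_r4 G \<psi> (yb_r3 G \<psi> (x, y)) = (x, y)"
proof -
  define u where "u = s3 x y"
  define v where "v = t3 y x"
  have uv: "u \<in> carrier G" "v \<in> carrier G" using xy by (simp_all add: u_def v_def)
  have r3: "yb_r3 G \<psi> (x, y) = (u, v)" by (simp add: u_def v_def)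
  obtain k where k: "k \<in> grp_center G" and psi: "\<psi> v = k \<otimes> \<psi> x"
    using psi_t3[OF xy] unfolding v_def .
  have kc: "k \<in> carrier G" using k by (rule center_closed)
  have "s4 u v = (u \<otimes> v) \<otimes> (\<psi> v \<otimes> inv u \<otimes> inv (\<psi> v))"
    using uv by (simp add: yb_r4_def group_simps del: hom_mult hom_inv)
  also have "u \<otimes> v = x \<otimes> y" unfolding u_def v_def by (rule s3_t3_mult[OF xy])
  also have "\<psi> v \<otimes> inv u \<otimes> inv (\<psi> v) = \<one> \<otimes> \<psi> x \<otimes> inv u \<otimes> inv (\<one> \<otimes> \<psi> x)"
    by (rule conj_central_factor[OF k]) (use xy uv kc in \<open>simp_all add: psi\<close>)
  also have "x \<otimes> y \<otimes> (\<one> \<otimes> \<psi> x \<otimes> inv u \<otimes> inv (\<one> \<otimes> \<psi> x)) = x"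
    using xy by (simp add: u_def yb_r3_def group_simps)
  finally have fst: "s4 u v = x" .
  have "x \<otimes> t4 v u = s4 u v \<otimes> t4 v u" by (simp only: fst)
  also have "\<dots> = u \<otimes> v" by (rule s4_t4_mult[OF uv])
  also have "\<dots> = x \<otimes> y" unfolding u_def v_def by (rule s3_t3_mult[OF xy])
  finally have "t4 v u = y" using xy uv by simp
  then show ?thesis using fst by (simp add: r3 prod_eq_iff)
qed

lemma braiding_operator_yb_r3: "braiding_operator G (yb_r3 G \<psi>)"
proof (intro braiding_operator.intro is_group braiding_operator_axioms.intro)
  show "\<And>x y. \<lbrakk>x \<in> carrier G; y \<in> carrier G\<rbrakk> \<Longrightarrow> yb_r3 G \<psi> (x, y) \<in> carrier G \<times> carrier G"
    by (rule yb_r3_closed)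
qed (simp_all add: s3_s3 s3_t3_mult s3_mult, simp_all add: yb_r3_def group_simps)

lemma nd_ybe_solution_yb_r3: "nd_ybe_solution (carrier G) (yb_r3 G \<psi>)"
proof -
  interpret r3: braiding_operator G "yb_r3 G \<psi>"
    by (rule braiding_operator_yb_r3)
  have "bij_betw (yb_r3 G \<psi>) (carrier G \<times> carrier G) (carrier G \<times> carrier G)"
    by (rule bij_betw_byWitness[where f' = "yb_r4 G \<psi>"])
      (auto simp: yb_r3_yb_r4 yb_r4_yb_r3 image_subset_iff yb_r3_closed yb_r4_closed)
  then show ?thesis
    using r3.braid_relation r3.nondegenerate
    by (auto simp: nd_ybe_solution_def ybe_solution_def)
qed

lemma nd_ybe_solution_yb_r4: "nd_ybe_solution (carrier G) (yb_r4 G \<psi>)"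
  by (rule nd_ybe_solution_inverse[OF nd_ybe_solution_yb_r3])
    (simp_all add: yb_r4_closed yb_r3_yb_r4 yb_r4_yb_r3)

end

theorem mainTheorem7:
  fixes G :: "('a, 'b) monoid_scheme" and \<psi> :: "'a \<Rightarrow> 'a"
  assumes grp: "group G"
    and endo: "\<psi> \<in> hom G G"
    and h1: "\<psi> ` comm_subgroup G (\<psi> ` carrier G) (carrier G) \<subseteq> grp_center G"
  shows "nd_ybe_solution (carrier G) (yb_r1 G \<psi>)
       \<and> nd_ybe_solution (carrier G) (yb_r2 G \<psi>)
       \<and> (\<forall>g\<in>carrier G. \<forall>h\<in>carrier G.
            yb_r1 G \<psi> (yb_r2 G \<psi> (g, h)) = (g, h) \<and> yb_r2 G \<psi> (yb_r1 G \<psi> (g, h)) = (g, h))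
       \<and> ((\<forall>g\<in>carrier G. \<forall>h\<in>carrier G. yb_r1 G \<psi> (g, h) = yb_r2 G \<psi> (g, h))
            \<longleftrightarrow> comm_group G)
       \<and> (\<psi> ` comm_subgroup G (carrier G) (carrier G) \<subseteq> grp_center G \<longrightarrow>
            nd_ybe_solution (carrier G) (yb_r3 G \<psi>)
          \<and> nd_ybe_solution (carrier G) (yb_r4 G \<psi>)
          \<and> (\<forall>g\<in>carrier G. \<forall>h\<in>carrier G.
               yb_r3 G \<psi> (yb_r4 G \<psi> (g, h)) = (g, h) \<and> yb_r4 G \<psi> (yb_r3 G \<psi> (g, h)) = (g, h))
          \<and> ((\<forall>g\<in>carrier G. \<forall>h\<in>carrier G. yb_r3 G \<psi> (g, h) = yb_r4 G \<psi> (g, h))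
               \<longleftrightarrow> (\<forall>g\<in>carrier G. \<forall>h\<in>carrier G.
                     g \<otimes>\<^bsub>G\<^esub> \<psi> g \<otimes>\<^bsub>G\<^esub> h \<otimes>\<^bsub>G\<^esub> inv\<^bsub>G\<^esub> (\<psi> g)
                   = h \<otimes>\<^bsub>G\<^esub> \<psi> h \<otimes>\<^bsub>G\<^esub> g \<otimes>\<^bsub>G\<^esub> inv\<^bsub>G\<^esub> (\<psi> h))))"
proof -
  interpret group G by (rule grp)
  interpret psi_central_endo G \<psi>
    by unfold_locales (use endo h1 in \<open>auto intro: psi_commutator_central\<close>)
  have part2: "nd_ybe_solution (carrier G) (yb_r3 G \<psi>)
      \<and> nd_ybe_solution (carrier G) (yb_r4 G \<psi>)
      \<and> (\<forall>g\<in>carrier G. \<forall>h\<in>carrier G.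
           yb_r3 G \<psi> (yb_r4 G \<psi> (g, h)) = (g, h) \<and> yb_r4 G \<psi> (yb_r3 G \<psi> (g, h)) = (g, h))"
    if h2: "\<psi> ` comm_subgroup G (carrier G) (carrier G) \<subseteq> grp_center G"
  proof -
    interpret psi_central_endo_strong G \<psi>
      by unfold_locales (use h2 in \<open>intro psi_commutator_central\<close>)
    show ?thesis by (simp add: nd_ybe_solution_yb_r3 nd_ybe_solution_yb_r4 yb_r3_yb_r4 yb_r4_yb_r3)
  qed
  show ?thesis
    using part2 by (simp add: nd_ybe_solution_yb_r1 nd_ybe_solution_yb_r2 yb_r1_yb_r2 yb_r2_yb_r1
      yb_r1_eq_yb_r2_iff_comm_group yb_r3_eq_yb_r4_iff)
qed

end
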